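(* Let $\Omega\subset\mathbb{R}^n$ be an open set. For every measurable $E\subset\mathbb{R}^n$ with $\widetilde{{\rm Per}}^\kappa_{s_0}(E,\Omega)<\infty$ for some $s_0\in(0,1/2)$, $$\lim_{s\to0^+}s\,\widetilde{{\rm Per}}^\kappa_s(E,\Omega)=0.$$
   Context: Let $\mathcal{R}$ be a root system in $\mathbb{R}^n$ with positive subsystem $\mathcal{R}_+$ and $\kappa:\mathcal{R}\to[0,\infty)$ a multiplicity function invariant under the associated reflection group. Set $w_\kappa(x)=\prod_{\alpha\in\mathcal{R}_+}|\langle\alpha,x\rangle|^{2\kappa(\alpha)}$, $\mu_\kappa=w_\kappa\,dx$, $\chi=\sum_{\alpha\in\mathcal{R}_+}\kappa(\alpha)$, $\mathfrak{c}_\kappa=\int e^{-|x|^2/2}\mu_\kappa(dx)\in(0,\infty)$, and $\nu_\kappa=\mathfrak{c}_\kappa^{-1}e^{-|x|^2/2}\mu_\kappa$. For disjoint measurable $A,B$ and $s\in(0,1/2)$, $\widetilde L^\kappa_s(A,B)=\int_A\int_B|x-y|^{-(2\chi+n+2s)}\nu_\kappa(dy)\nu_\kappa(dx)$, and for open $\Omega$ and measurable $E$ (with $E^c=\mathbb{R}^n\setminus E$), $\widetilde{{\rm Per}}^\kappa_s(E,\Omega)=\widetilde L^\kappa_s(E\cap\Omega,E^c\cap\Omega)+\widetilde L^\kappa_s(E\cap\Omega,E^c\cap\Omega^c)+\widetilde L^\kappa_s(E\cap\Omega^c,E^c\cap\Omega)$. *)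

theory Defs
  imports "HOL-Analysis.Analysis"
begin

definition refl_root :: "'a::euclidean_space \<Rightarrow> 'a \<Rightarrow> 'a" where
  "refl_root \<alpha> x = x - (2 * (\<alpha> \<bullet> x) / (\<alpha> \<bullet> \<alpha>)) *\<^sub>R \<alpha>"

definition root_system :: "'a::euclidean_space set \<Rightarrow> bool" where
  "root_system R \<longleftrightarrow> finite R \<and> 0 \<notin> R \<and>
     (\<forall>\<alpha>\<in>R. \<forall>\<beta>\<in>R. refl_root \<alpha> \<beta> \<in> R) \<and>
     (\<forall>\<alpha>\<in>R. \<forall>c::real. c *\<^sub>R \<alpha> \<in> R \<longrightarrow> c = 1 \<or> c = -1)"

definition positive_subsystem :: "'a::euclidean_space set \<Rightarrow> 'a set \<Rightarrow> bool" where
  "positive_subsystem R Rp \<longleftrightarrow>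
     (\<exists>\<beta>. (\<forall>\<alpha>\<in>R. \<alpha> \<bullet> \<beta> \<noteq> 0) \<and> Rp = {\<alpha>\<in>R. \<alpha> \<bullet> \<beta> > 0})"

text \<open>Multiplicity function: nonnegative on R and invariant under the reflection
  group (equivalently, under its generating reflections).\<close>
definition multiplicity :: "'a::euclidean_space set \<Rightarrow> ('a \<Rightarrow> real) \<Rightarrow> bool" where
  "multiplicity R \<kappa> \<longleftrightarrow> (\<forall>\<alpha>\<in>R. \<kappa> \<alpha> \<ge> 0) \<and>
     (\<forall>\<alpha>\<in>R. \<forall>\<beta>\<in>R. \<kappa> (refl_root \<alpha> \<beta>) = \<kappa> \<beta>)"

text \<open>Weight w_kappa, with the convention t^0 = 1 (also for t = 0).\<close>
definition dunkl_weight :: "'a::euclidean_space set \<Rightarrow> ('a \<Rightarrow> real) \<Rightarrow> 'a \<Rightarrow> real" where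
  "dunkl_weight Rp \<kappa> x =
     (\<Prod>\<alpha>\<in>Rp. if \<kappa> \<alpha> = 0 then 1 else \<bar>\<alpha> \<bullet> x\<bar> powr (2 * \<kappa> \<alpha>))"

definition dunkl_chi :: "'a set \<Rightarrow> ('a \<Rightarrow> real) \<Rightarrow> real" where
  "dunkl_chi Rp \<kappa> = (\<Sum>\<alpha>\<in>Rp. \<kappa> \<alpha>)"

definition dunkl_const :: "'a::euclidean_space set \<Rightarrow> ('a \<Rightarrow> real) \<Rightarrow> ennreal" where
  "dunkl_const Rp \<kappa> =
     (\<integral>\<^sup>+ x. ennreal (exp (- (norm x)\<^sup>2 / 2) * dunkl_weight Rp \<kappa> x) \<partial>lebesgue)"

definition dunkl_gauss :: "'a::euclidean_space set \<Rightarrow> ('a \<Rightarrow> real) \<Rightarrow> 'a measure" where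
  "dunkl_gauss Rp \<kappa> = density lebesgue
     (\<lambda>x. ennreal (exp (- (norm x)\<^sup>2 / 2) * dunkl_weight Rp \<kappa> x) / dunkl_const Rp \<kappa>)"

definition dunkl_L :: "'a::euclidean_space set \<Rightarrow> ('a \<Rightarrow> real) \<Rightarrow> real \<Rightarrow> 'a set \<Rightarrow> 'a set \<Rightarrow> ennreal" where
  "dunkl_L Rp \<kappa> s A B =
     (\<integral>\<^sup>+ x\<in>A. (\<integral>\<^sup>+ y\<in>B.
        ennreal (norm (x - y) powr (- (2 * dunkl_chi Rp \<kappa> + real DIM('a) + 2 * s)))
        \<partial>dunkl_gauss Rp \<kappa>) \<partial>dunkl_gauss Rp \<kappa>)"

definition dunkl_Per :: "'a::euclidean_space set \<Rightarrow> ('a \<Rightarrow> real) \<Rightarrow> real \<Rightarrow> 'a set \<Rightarrow> 'a set \<Rightarrow> ennreal" where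
  "dunkl_Per Rp \<kappa> s E \<Omega> =
     dunkl_L Rp \<kappa> s (E \<inter> \<Omega>) (- E \<inter> \<Omega>) +
     dunkl_L Rp \<kappa> s (E \<inter> \<Omega>) (- E \<inter> - \<Omega>) +
     dunkl_L Rp \<kappa> s (E \<inter> - \<Omega>) (- E \<inter> \<Omega>)"

end

theory Submission
  imports Defs
begin

text \<open>Lowering the order \<open>s\<close> of the kernel \<open>|x - y| powr -(2\<chi> + n + 2s)\<close> can only increase it
  near the diagonal and keeps it below \<open>1\<close> away from it. Hence, for \<open>0 < s \<le> s\<^sub>0\<close>, each of the
  three interaction terms at order \<open>s\<close> exceeds the one at order \<open>s\<^sub>0\<close> by at most
  \<open>\<nu>\<^sub>\<kappa>(A) \<nu>\<^sub>\<kappa>(B) \<le> 1\<close>, so \<open>Per\<^sub>s(E, \<Omega>)\<close> stays bounded as \<open>s \<rightarrow> 0\<^sup>+\<close> and \<open>s Per\<^sub>s(E, \<Omega>) \<rightarrow> 0\<close>.\<close>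

lemma powr_neg_le_powr_neg_plus_one:
  fixes d a b :: real
  assumes "0 \<le> d" "0 \<le> a" "a \<le> b"
  shows "d powr - a \<le> d powr - b + 1"
proof (cases "d \<le> 1")
  case True
  show ?thesis
  proof (cases "d = 0")
    case False
    then have "d powr - a \<le> d powr - b"
      using True assms by (intro powr_mono') auto
    then show ?thesis by simp
  qed simp
next
  case False
  then have "d powr - a \<le> 1"
    using assms powr_mono[of "- a" 0 d] by simp
  then show ?thesis by (smt (verit) powr_ge_zero)
qed

lemma nn_integral_pair_le_plus_measure:
  fixes k k\<^sub>0 :: "'a \<Rightarrow> 'a \<Rightarrow> ennreal"
  assumes "sigma_finite_measure M"
    and k\<^sub>0[measurable]: "(\<lambda>(x, y). k\<^sub>0 x y) \<in> borel_measurable (M \<Otimes>\<^sub>M M)"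
    and [measurable]: "A \<in> sets M" "B \<in> sets M"
    and k_le: "\<And>x y. k x y \<le> k\<^sub>0 x y + 1"
  shows "(\<integral>\<^sup>+ x\<in>A. (\<integral>\<^sup>+ y\<in>B. k x y \<partial>M) \<partial>M)
    \<le> (\<integral>\<^sup>+ x\<in>A. (\<integral>\<^sup>+ y\<in>B. k\<^sub>0 x y \<partial>M) \<partial>M) + emeasure M B * emeasure M A"
proof -
  interpret sigma_finite_measure M by fact
  have inner: "(\<integral>\<^sup>+ y\<in>B. k x y \<partial>M) \<le> (\<integral>\<^sup>+ y\<in>B. k\<^sub>0 x y \<partial>M) + emeasure M B"
    if "x \<in> space M" for x
  proof -
    have [measurable]: "k\<^sub>0 x \<in> borel_measurable M"
      using measurable_Pair2[OF k\<^sub>0 that] by simp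
    have "(\<integral>\<^sup>+ y\<in>B. k x y \<partial>M) \<le> (\<integral>\<^sup>+ y. k\<^sub>0 x y * indicator B y + indicator B y \<partial>M)"
      using k_le by (intro nn_integral_mono) (auto simp: indicator_def)
    also have "\<dots> = (\<integral>\<^sup>+ y\<in>B. k\<^sub>0 x y \<partial>M) + emeasure M B"
      by (subst nn_integral_add) auto
    finally show ?thesis .
  qed
  have "(\<integral>\<^sup>+ x\<in>A. (\<integral>\<^sup>+ y\<in>B. k x y \<partial>M) \<partial>M)
      \<le> (\<integral>\<^sup>+ x. (\<integral>\<^sup>+ y\<in>B. k\<^sub>0 x y \<partial>M) * indicator A x + emeasure M B * indicator A x \<partial>M)"
    using inner by (intro nn_integral_mono) (auto simp: indicator_def)
  also have "\<dots> = (\<integral>\<^sup>+ x\<in>A. (\<integral>\<^sup>+ y\<in>B. k\<^sub>0 x y \<partial>M) \<partial>M) + emeasure M B * emeasure M A"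
    by (subst nn_integral_add) (auto simp: nn_integral_cmult_indicator)
  finally show ?thesis .
qed

lemma sets_dunkl_gauss [simp]: "sets (dunkl_gauss Rp \<kappa>) = sets lebesgue"
  and space_dunkl_gauss [simp]: "space (dunkl_gauss Rp \<kappa>) = UNIV"
  by (simp_all add: dunkl_gauss_def)

lemma emeasure_dunkl_gauss_le_1:
  fixes Rp :: "'a::euclidean_space set"
  shows "emeasure (dunkl_gauss Rp \<kappa>) A \<le> 1"
proof -
  let ?f = "\<lambda>x. ennreal (exp (- (norm x)\<^sup>2 / 2) * dunkl_weight Rp \<kappa> x)"
  have "?f \<in> borel_measurable lborel"
    unfolding dunkl_weight_def by measurable
  then have f: "?f \<in> borel_measurable lebesgue"
    by (rule measurable_completion)
  have "emeasure (dunkl_gauss Rp \<kappa>) A \<le> emeasure (dunkl_gauss Rp \<kappa>) UNIV"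
    by (metis emeasure_space space_dunkl_gauss)
  also have "\<dots> = (\<integral>\<^sup>+ x. ?f x / dunkl_const Rp \<kappa> \<partial>lebesgue)"
    unfolding dunkl_gauss_def using f by (subst emeasure_density) auto
  also have "\<dots> = dunkl_const Rp \<kappa> / dunkl_const Rp \<kappa>"
    unfolding dunkl_const_def using f by (rule nn_integral_divide)
  also have "\<dots> \<le> 1"
    by (cases "dunkl_const Rp \<kappa> = 0"; cases "dunkl_const Rp \<kappa> = top") (auto simp: less_top)
  finally show ?thesis .
qed

lemma finite_measure_dunkl_gauss:
  fixes Rp :: "'a::euclidean_space set"
  shows "finite_measure (dunkl_gauss Rp \<kappa>)"
  using emeasure_dunkl_gauss_le_1[of Rp \<kappa> "space (dunkl_gauss Rp \<kappa>)"]
  by (intro finite_measureI) (auto simp: top_unique)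

lemma dunkl_chi_nonneg:
  assumes "positive_subsystem R Rp" "multiplicity R \<kappa>"
  shows "0 \<le> dunkl_chi Rp \<kappa>"
proof -
  have "Rp \<subseteq> R" using assms(1) unfolding positive_subsystem_def by auto
  then show ?thesis
    using assms(2) unfolding multiplicity_def dunkl_chi_def by (auto intro!: sum_nonneg)
qed

lemma dunkl_L_le_plus_one:
  fixes Rp :: "'a::euclidean_space set"
  assumes "0 \<le> dunkl_chi Rp \<kappa>" "A \<in> sets lebesgue" "B \<in> sets lebesgue" "0 \<le> s" "s \<le> s\<^sub>0"
  shows "dunkl_L Rp \<kappa> s A B \<le> dunkl_L Rp \<kappa> s\<^sub>0 A B + 1"
proof -
  let ?\<nu> = "dunkl_gauss Rp \<kappa>"
  define e where "e = 2 * dunkl_chi Rp \<kappa> + real DIM('a)"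
  interpret finite_measure ?\<nu> by (rule finite_measure_dunkl_gauss)
  have [measurable]: "(\<lambda>x. x) \<in> ?\<nu> \<rightarrow>\<^sub>M borel"
    unfolding measurable_cong_sets[OF sets_dunkl_gauss refl] by (rule measurable_completion) simp
  have "dunkl_L Rp \<kappa> s A B \<le> dunkl_L Rp \<kappa> s\<^sub>0 A B + emeasure ?\<nu> B * emeasure ?\<nu> A"
    unfolding dunkl_L_def e_def[symmetric]
  proof (rule nn_integral_pair_le_plus_measure)
    show "sigma_finite_measure ?\<nu>" by unfold_locales
    show "(\<lambda>(x, y). ennreal (norm (x - y) powr - (e + 2 * s\<^sub>0))) \<in> borel_measurable (?\<nu> \<Otimes>\<^sub>M ?\<nu>)"
      by measurable
    show "ennreal (norm (x - y) powr - (e + 2 * s)) \<le> ennreal (norm (x - y) powr - (e + 2 * s\<^sub>0)) + 1"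
      for x y :: 'a
    proof -
      have "norm (x - y) powr - (e + 2 * s) \<le> norm (x - y) powr - (e + 2 * s\<^sub>0) + 1"
        using assms by (intro powr_neg_le_powr_neg_plus_one) (auto simp: e_def)
      then have "ennreal (norm (x - y) powr - (e + 2 * s)) \<le> ennreal (norm (x - y) powr - (e + 2 * s\<^sub>0) + 1)"
        by (rule ennreal_leI)
      then show ?thesis by (subst (asm) ennreal_plus) auto
    qed
    show "A \<in> sets ?\<nu>" "B \<in> sets ?\<nu>"
      using assms by simp_all
  qed
  also have "\<dots> \<le> dunkl_L Rp \<kappa> s\<^sub>0 A B + 1 * 1"
    by (intro add_left_mono mult_mono emeasure_dunkl_gauss_le_1) auto
  finally show ?thesis by simp
qed

lemma dunkl_Per_le_plus_three:
  fixes Rp :: "'a::euclidean_space set"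
  assumes "0 \<le> dunkl_chi Rp \<kappa>" "E \<in> sets lebesgue" "\<Omega> \<in> sets lebesgue" "0 \<le> s" "s \<le> s\<^sub>0"
  shows "dunkl_Per Rp \<kappa> s E \<Omega> \<le> dunkl_Per Rp \<kappa> s\<^sub>0 E \<Omega> + 3"
proof -
  have [measurable]: "E \<in> sets lebesgue" "\<Omega> \<in> sets lebesgue" by fact+
  have L: "dunkl_L Rp \<kappa> s A B \<le> dunkl_L Rp \<kappa> s\<^sub>0 A B + 1"
    if "A \<in> sets lebesgue" "B \<in> sets lebesgue" for A B
    using assms(1) that assms(4,5) by (rule dunkl_L_le_plus_one)
  have "dunkl_Per Rp \<kappa> s E \<Omega> \<le> (dunkl_L Rp \<kappa> s\<^sub>0 (E \<inter> \<Omega>) (- E \<inter> \<Omega>) + 1)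
      + (dunkl_L Rp \<kappa> s\<^sub>0 (E \<inter> \<Omega>) (- E \<inter> - \<Omega>) + 1) + (dunkl_L Rp \<kappa> s\<^sub>0 (E \<inter> - \<Omega>) (- E \<inter> \<Omega>) + 1)"
    unfolding dunkl_Per_def by (intro add_mono L) (auto simp: Compl_eq_Diff_UNIV)
  also have "\<dots> = dunkl_Per Rp \<kappa> s\<^sub>0 E \<Omega> + 3"
    unfolding dunkl_Per_def by (simp add: algebra_simps numeral_eq_Suc)
  finally show ?thesis .
qed

lemma tendsto_ennreal_mult_bounded_at_right_0:
  fixes f :: "real \<Rightarrow> ennreal"
  assumes "K < \<infinity>" "\<forall>\<^sub>F s in at_right 0. f s \<le> K"
  shows "((\<lambda>s. ennreal s * f s) \<longlongrightarrow> 0) (at_right 0)"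
proof (rule tendsto_sandwich[OF _ _ tendsto_const])
  show "\<forall>\<^sub>F s in at_right 0. 0 \<le> ennreal s * f s" by simp
  show "\<forall>\<^sub>F s in at_right 0. ennreal s * f s \<le> ennreal s * K"
    using assms(2) by eventually_elim (rule mult_left_mono, auto)
  have "((\<lambda>s. ennreal s * K) \<longlongrightarrow> ennreal 0 * K) (at_right 0)"
    using assms(1) by (intro tendsto_mult_ennreal tendsto_intros) auto
  then show "((\<lambda>s. ennreal s * K) \<longlongrightarrow> 0) (at_right 0)" by simp
qed

theorem proposition1p10:
  fixes R Rp :: "'a::euclidean_space set" and \<kappa> :: "'a \<Rightarrow> real"
    and \<Omega> E :: "'a set" and s0 :: real
  assumes "root_system R" and "positive_subsystem R Rp" and "multiplicity R \<kappa>"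
    and "open \<Omega>" and "E \<in> sets lebesgue"
    and "0 < s0" and "s0 < 1/2"
    and "dunkl_Per Rp \<kappa> s0 E \<Omega> < \<infinity>"
  shows "((\<lambda>s. ennreal s * dunkl_Per Rp \<kappa> s E \<Omega>) \<longlongrightarrow> 0) (at_right 0)"
proof (rule tendsto_ennreal_mult_bounded_at_right_0)
  show "dunkl_Per Rp \<kappa> s0 E \<Omega> + 3 < \<infinity>"
    using assms(8) by (simp add: less_top[symmetric])
  have "0 \<le> dunkl_chi Rp \<kappa>" using assms(2,3) by (rule dunkl_chi_nonneg)
  moreover have "\<Omega> \<in> sets lebesgue" using assms(4) by simp
  moreover have "\<forall>\<^sub>F s in at_right 0. 0 < s \<and> s < s0"
    using eventually_at_right_real[OF assms(6)] by simp
  ultimately show "\<forall>\<^sub>F s in at_right 0. dunkl_Per Rp \<kappa> s E \<Omega> \<le> dunkl_Per Rp \<kappa> s0 E \<Omega> + 3"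
    by (elim eventually_mono) (intro dunkl_Per_le_plus_three assms(5), auto)
qed

end
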